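(* Let $\varphi\colon[\mathbb{F}_2,\mathbb{F}_2]\to\mathbb{Z}$ be the homomorphism defined below and $G_1=\ker\varphi$. Suppose $g\in[\mathbb{F}_2,\mathbb{F}_2]$ satisfies $\varphi(g)=0$ and $g=ab$ with $a,b\in\mathbb{F}_2$ conjugate in $\mathbb{F}_2$. Then $a,b\in G_1$.
   Context: $\mathbb{F}_2$ is the free group on $x,y$. Let $\tilde K$ be the graph with vertex set $\mathbb{Z}^2$ and oriented edges $x^iy^jX$ from $(i,j)$ to $(i+1,j)$ and $x^iy^jY$ from $(i,j)$ to $(i,j+1)$ (the universal abelian cover of the wedge of two circles). A $1$-chain is written $\alpha=P_\alpha(x,y)X+Q_\alpha(x,y)Y$ with $P_\alpha,Q_\alpha$ integer Laurent polynomials (the coefficient of $x^iy^j$ in $P_\alpha$ is the coefficient of the edge $x^iy^jX$, similarly for $Q_\alpha$). For $g\in[\mathbb{F}_2,\mathbb{F}_2]$ written as a word in $x^{\pm1},y^{\pm1}$, the associated cycle $\alpha_g$ is the $1$-cycle traced by the lattice path starting at $(0,0)$ in which a letter $x$ (resp. $x^{-1}$, $y$, $y^{-1}$) moves by $(1,0)$ (resp. $(-1,0)$, $(0,1)$, $(0,-1)$) along the corresponding edge, each edge counted with sign $+1$ if traversed in its orientation and $-1$ otherwise; its homology class depends only on $g$. Let $f_\alpha(y)=P_\alpha(1,y)$. Define $\varphi(g)=f_{\alpha_g}'(1)$; this is a homomorphism $[\mathbb{F}_2,\mathbb{F}_2]\to\mathbb{Z}$. *)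

theory Defs
  imports "HOL-Analysis.Derivative" "HOL-Algebra.Solvable_Groups"
begin

datatype gen = GX | GY

text \<open>A letter is a generator with a sign: (GX, True) = x, (GX, False) = x^-1, etc.\<close>
type_synonym letter = "gen \<times> bool"

definition inv_letter :: "letter \<Rightarrow> letter" where
  "inv_letter l = (fst l, \<not> snd l)"

fun reduced :: "letter list \<Rightarrow> bool" where
  "reduced [] = True"
| "reduced [l] = True"
| "reduced (l # m # w) = (m \<noteq> inv_letter l \<and> reduced (m # w))"

fun push :: "letter \<Rightarrow> letter list \<Rightarrow> letter list" where
  "push l [] = [l]"
| "push l (m # w) = (if m = inv_letter l then w else l # m # w)"

definition red :: "letter list \<Rightarrow> letter list" where
  "red w = foldr push w []"

definition F2 :: "letter list monoid" where
  "F2 = \<lparr> carrier = {w. reduced w}, mult = (\<lambda>a b. red (a @ b)), one = [] \<rparr>"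

definition comm_F2 :: "letter list set" where
  "comm_F2 = derived F2 (carrier F2)"

definition conjugate_F2 :: "letter list \<Rightarrow> letter list \<Rightarrow> bool" where
  "conjugate_F2 a b \<longleftrightarrow> (\<exists>c \<in> carrier F2. b = c \<otimes>\<^bsub>F2\<^esub> a \<otimes>\<^bsub>F2\<^esub> inv\<^bsub>F2\<^esub> c)"

text \<open>Coefficients of the X-edges of the lattice path of a word starting at point p:
  chainX p w (i,j) is the coefficient of the edge x^i y^j X, i.e. the coefficient of
  x^i y^j in P_alpha.\<close>
fun chainX :: "int \<times> int \<Rightarrow> letter list \<Rightarrow> int \<times> int \<Rightarrow> int" where
  "chainX p [] = (\<lambda>_. 0)"
| "chainX (i, j) ((GX, True) # w) =
     (\<lambda>e. chainX (i + 1, j) w e + (if e = (i, j) then 1 else 0))"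
| "chainX (i, j) ((GX, False) # w) =
     (\<lambda>e. chainX (i - 1, j) w e - (if e = (i - 1, j) then 1 else 0))"
| "chainX (i, j) ((GY, True) # w) = chainX (i, j + 1) w"
| "chainX (i, j) ((GY, False) # w) = chainX (i, j - 1) w"

text \<open>The chain of a word is supported in the box [-n,n]^2, n = length; so
  f_alpha(t) = P_alpha(1,t) is the following finite sum (a Laurent polynomial in t).\<close>
definition f_alpha :: "letter list \<Rightarrow> real \<Rightarrow> real" where
  "f_alpha w t = (\<Sum>e \<in> {-int (length w)..int (length w)} \<times> {-int (length w)..int (length w)}.
      real_of_int (chainX (0, 0) w e) * t powi (snd e))"

definition phi :: "letter list \<Rightarrow> real" where
  "phi g = deriv (f_alpha g) 1"

end

theory Submission
  imports Defs
begin

text \<open>Write \<open>e\<^sub>x, e\<^sub>y\<close> for the exponent sums. On words, \<open>\<phi>\<close> is the sum of the heights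
  of the \<open>X\<close>-edges of the lattice path, and it obeys the cocycle rule
  \<open>\<phi>(uv) = \<phi>(u) + \<phi>(v) + e\<^sub>y(u) e\<^sub>x(v)\<close> (the central coordinate of the map to the
  Heisenberg group). As \<open>[F\<^sub>2,F\<^sub>2]\<close> is the common kernel of \<open>e\<^sub>x\<close> and \<open>e\<^sub>y\<close>, the
  conjugates \<open>a, b\<close> have equal exponent sums adding up to those of \<open>g\<close>, which vanish;
  so \<open>a, b \<in> [F\<^sub>2,F\<^sub>2]\<close>. On such elements the cocycle rule makes \<open>\<phi>\<close> additive and
  conjugation invariant, whence \<open>2\<phi>(a) = \<phi>(g) = 0\<close>.\<close>

lemma inv_letter_inv_letter [simp]: "inv_letter (inv_letter l) = l"
  by (simp add: inv_letter_def)

lemma reduced_ConsD: "reduced (l # w) \<Longrightarrow> reduced w"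
  by (cases w) auto

lemma push_reduced: "reduced (l # w) \<Longrightarrow> push l w = l # w"
  by (cases w) auto

lemma reduced_push: "reduced w \<Longrightarrow> reduced (push l w)"
  by (cases w) (auto dest: reduced_ConsD)

lemma push_push_inv_letter: "reduced w \<Longrightarrow> push l (push (inv_letter l) w) = w"
proof (cases w)
  case (Cons m w')
  assume "reduced w"
  then have "m = l \<Longrightarrow> push l w' = l # w'"
    using Cons by (cases w') auto
  then show ?thesis
    using Cons by auto
qed simp

lemma red_Nil [simp]: "red [] = []"
  by (simp add: red_def)

lemma red_Cons: "red (l # w) = push l (red w)"
  by (simp add: red_def)

lemma red_append: "red (u @ v) = foldr push u (red v)"
  by (simp add: red_def)

lemma reduced_red: "reduced (red w)"
  by (induction w) (simp_all add: red_Cons reduced_push)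

lemma red_reduced: "reduced w \<Longrightarrow> red w = w"
proof (induction w)
  case (Cons l w)
  then show ?case
    using reduced_ConsD push_reduced by (simp add: red_Cons)
qed simp

lemma red_cancel: "red (u @ l # inv_letter l # v) = red (u @ v)"
  by (simp add: red_append red_Cons push_push_inv_letter reduced_red)

lemma cancel_invariant_red:
  assumes cancel: "\<And>u l v. f (u @ l # inv_letter l # v) = f (u @ v)"
  shows "f (u @ red w) = f (u @ w)"
proof (induction w arbitrary: u)
  case (Cons l w)
  show ?case
  proof (cases "\<exists>r. red w = inv_letter l # r")
    case True
    then obtain r where r: "red w = inv_letter l # r" by blast
    have "f (u @ red (l # w)) = f (u @ r)"
      using r by (simp add: red_Cons)
    also have "\<dots> = f ((u @ [l]) @ red w)"
      using cancel[of u l r] r by simp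
    also have "\<dots> = f ((u @ [l]) @ w)"
      by (rule Cons.IH)
    finally show ?thesis by simp
  next
    case False
    then have "push l (red w) = l # red w"
      by (cases "red w") auto
    then have "f (u @ red (l # w)) = f ((u @ [l]) @ red w)"
      by (simp add: red_Cons)
    also have "\<dots> = f ((u @ [l]) @ w)"
      by (rule Cons.IH)
    finally show ?thesis by simp
  qed
qed simp

lemma red_red_left: "red (red u @ v) = red (u @ v)"
  using cancel_invariant_red[of "\<lambda>w. red (w @ v)" "[]"] by (simp add: red_cancel)

lemma red_red_right: "red (u @ red v) = red (u @ v)"
  using cancel_invariant_red[of red] by (simp add: red_cancel)

definition winv :: "letter list \<Rightarrow> letter list" where
  "winv w = rev (map inv_letter w)"

lemma winv_Nil [simp]: "winv [] = []"
  and winv_Cons [simp]: "winv (l # w) = winv w @ [inv_letter l]"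
  by (simp_all add: winv_def)

lemma red_winv_append: "red (winv w @ w) = []"
proof (induction w)
  case (Cons l w)
  then show ?case
    using red_cancel[of "winv w" "inv_letter l" w] by simp
qed simp

lemma carrier_F2: "carrier F2 = {w. reduced w}"
  and mult_F2: "x \<otimes>\<^bsub>F2\<^esub> y = red (x @ y)"
  and one_F2: "\<one>\<^bsub>F2\<^esub> = []"
  by (simp_all add: F2_def)

lemma group_F2: "group F2"
proof (rule groupI)
  fix x y z
  show "x \<otimes>\<^bsub>F2\<^esub> y \<in> carrier F2"
    by (simp add: carrier_F2 mult_F2 reduced_red)
  show "x \<otimes>\<^bsub>F2\<^esub> y \<otimes>\<^bsub>F2\<^esub> z = x \<otimes>\<^bsub>F2\<^esub> (y \<otimes>\<^bsub>F2\<^esub> z)"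
    by (simp add: mult_F2 red_red_left red_red_right)
next
  fix x assume "x \<in> carrier F2"
  then show "\<one>\<^bsub>F2\<^esub> \<otimes>\<^bsub>F2\<^esub> x = x"
    by (simp add: carrier_F2 one_F2 mult_F2 red_reduced)
  show "\<exists>y\<in>carrier F2. y \<otimes>\<^bsub>F2\<^esub> x = \<one>\<^bsub>F2\<^esub>"
    by (rule bexI[of _ "red (winv x)"])
      (simp_all add: carrier_F2 one_F2 mult_F2 reduced_red red_red_left red_winv_append)
qed (simp add: carrier_F2 one_F2)

lemma inv_F2: "x \<in> carrier F2 \<Longrightarrow> inv\<^bsub>F2\<^esub> x = red (winv x)"
  by (rule group.inv_equality[OF group_F2])
    (simp_all add: carrier_F2 one_F2 mult_F2 reduced_red red_red_left red_winv_append)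

definition letter_weight :: "gen \<Rightarrow> letter \<Rightarrow> int" where
  "letter_weight s l = (if fst l = s then (if snd l then 1 else -1) else 0)"

definition exp_sum :: "gen \<Rightarrow> letter list \<Rightarrow> int" where
  "exp_sum s w = sum_list (map (letter_weight s) w)"

lemma letter_weight_inv_letter [simp]: "letter_weight s (inv_letter l) = - letter_weight s l"
  by (simp add: letter_weight_def inv_letter_def)

lemma letter_weight_GX_mult_GY: "letter_weight GX l * letter_weight GY l = 0"
  by (simp add: letter_weight_def)

lemma exp_sum_Nil [simp]: "exp_sum s [] = 0"
  and exp_sum_Cons [simp]: "exp_sum s (l # w) = letter_weight s l + exp_sum s w"
  and exp_sum_append [simp]: "exp_sum s (u @ v) = exp_sum s u + exp_sum s v"
  by (simp_all add: exp_sum_def)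

lemma exp_sum_winv [simp]: "exp_sum s (winv w) = - exp_sum s w"
  by (induction w) simp_all

lemma exp_sum_red: "exp_sum s (red w) = exp_sum s w"
  using cancel_invariant_red[of "exp_sum s" "[]"] by simp

text \<open>\<open>xheight j w\<close> sums \<open>k\<close> times the coefficient of the edge \<open>x\<^sup>i y\<^sup>k X\<close>
  over the chain of the path of \<open>w\<close> started at height \<open>j\<close>; for \<open>j = 0\<close> this is
  \<open>f\<^sub>\<alpha>'(1)\<close>.\<close>

primrec xheight :: "int \<Rightarrow> letter list \<Rightarrow> int" where
  "xheight j [] = 0"
| "xheight j (l # w) = letter_weight GX l * j + xheight (j + letter_weight GY l) w"

lemma xheight_append: "xheight j (u @ v) = xheight j u + xheight (j + exp_sum GY u) v"
  by (induction u arbitrary: j) (simp_all add: algebra_simps)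

lemma xheight_shift: "xheight (j + k) w = xheight j w + k * exp_sum GX w"
proof (induction w arbitrary: j)
  case (Cons l w)
  then show ?case
    using Cons.IH[of "j + letter_weight GY l"] by (simp add: algebra_simps)
qed simp

lemma xheight_cancel: "xheight j (l # inv_letter l # w) = xheight j w"
  using letter_weight_GX_mult_GY[of l] by (simp add: algebra_simps)

lemma xheight_red: "xheight j (red w) = xheight j w"
proof -
  have "xheight j (u @ l # inv_letter l # v) = xheight j (u @ v)" for u l v
    by (simp only: xheight_append xheight_cancel)
  then show ?thesis
    using cancel_invariant_red[of "xheight j" "[]"] by simp
qed

definition box :: "int \<times> int \<Rightarrow> nat \<Rightarrow> (int \<times> int) set" where
  "box p n = {fst p - int n..fst p + int n} \<times> {snd p - int n..snd p + int n}"

lemma sum_chainX_times_height: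
  assumes "finite S" and "box p (length w) \<subseteq> S"
  shows "(\<Sum>e\<in>S. chainX p w e * snd e) = xheight (snd p) w"
  using assms
proof (induction p w rule: chainX.induct)
  case (2 i j w)
  have "box (i + 1, j) (length w) \<subseteq> S" "(i, j) \<in> S"
    using "2.prems"(2) by (auto simp: box_def subset_iff)
  have "(\<Sum>e\<in>S. chainX (i, j) ((GX, True) # w) e * snd e) =
      (\<Sum>e\<in>S. chainX (i + 1, j) w e * snd e + (if e = (i, j) then snd e else 0))"
    by (intro sum.cong) (auto simp: distrib_right)
  then show ?case
    using 2 \<open>(i, j) \<in> S\<close> \<open>box (i + 1, j) (length w) \<subseteq> S\<close>
    by (simp add: sum.distrib letter_weight_def)
next
  case (3 i j w)
  have "box (i - 1, j) (length w) \<subseteq> S" "(i - 1, j) \<in> S"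
    using "3.prems"(2) by (auto simp: box_def subset_iff)
  have "(\<Sum>e\<in>S. chainX (i, j) ((GX, False) # w) e * snd e) =
      (\<Sum>e\<in>S. chainX (i - 1, j) w e * snd e - (if e = (i - 1, j) then snd e else 0))"
    by (intro sum.cong) (auto simp: left_diff_distrib)
  then show ?case
    using 3 \<open>(i - 1, j) \<in> S\<close> \<open>box (i - 1, j) (length w) \<subseteq> S\<close>
    by (simp add: sum_subtractf letter_weight_def)
next
  case (4 i j w)
  then have "box (i, j + 1) (length w) \<subseteq> S"
    by (auto simp: box_def subset_iff)
  then show ?case
    using 4 by (simp add: letter_weight_def)
next
  case (5 i j w)
  then have "box (i, j - 1) (length w) \<subseteq> S"
    by (auto simp: box_def subset_iff)
  then show ?case
    using 5 by (simp add: letter_weight_def)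
qed simp

lemma phi_eq_xheight: "phi w = of_int (xheight 0 w)"
proof -
  define B where "B = {-int (length w)..int (length w)} \<times> {-int (length w)..int (length w)}"
  have "(f_alpha w has_real_derivative
      (\<Sum>e\<in>B. of_int (chainX (0, 0) w e) * (of_int (snd e) * 1 powi (snd e - 1) * 1))) (at 1)"
    unfolding f_alpha_def B_def by (intro DERIV_sum DERIV_cmult DERIV_power_int DERIV_ident) simp
  then have "phi w = (\<Sum>e\<in>B. of_int (chainX (0, 0) w e * snd e))"
    unfolding phi_def by (simp add: DERIV_imp_deriv)
  also have "\<dots> = of_int (\<Sum>e\<in>B. chainX (0, 0) w e * snd e)"
    by (rule of_int_sum[symmetric])
  also have "(\<Sum>e\<in>B. chainX (0, 0) w e * snd e) = xheight 0 w"
    using sum_chainX_times_height[of B "(0, 0)" w] by (simp add: B_def box_def)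
  finally show ?thesis .
qed

lemma exp_sum_mult_F2: "exp_sum s (a \<otimes>\<^bsub>F2\<^esub> b) = exp_sum s a + exp_sum s b"
  by (simp add: mult_F2 exp_sum_red)

lemma exp_sum_inv_F2: "a \<in> carrier F2 \<Longrightarrow> exp_sum s (inv\<^bsub>F2\<^esub> a) = - exp_sum s a"
  by (simp add: inv_F2 exp_sum_red)

lemma (in comm_group) hom_F2_eq_exp_sums:
  assumes h: "h \<in> hom F2 G" and w: "w \<in> carrier F2"
  shows "h w = h [(GX, True)] [^] exp_sum GX w \<otimes> h [(GY, True)] [^] exp_sum GY w"
proof -
  interpret hom: group_hom F2 G h
    by (simp add: group_hom_def group_hom_axioms_def group_F2 is_group h)
  define X Y where "X = h [(GX, True)]" and "Y = h [(GY, True)]"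
  have XY: "X \<in> carrier G" "Y \<in> carrier G"
    unfolding X_def Y_def by (simp_all add: carrier_F2)
  have inv_letter_image: "h [(s, False)] = inv (h [(s, True)])" for s
    using hom.hom_inv[of "[(s, True)]"] by (simp add: carrier_F2 inv_F2 red_Cons inv_letter_def)
  have letter_image: "h [l] = X [^] letter_weight GX l \<otimes> Y [^] letter_weight GY l" for l
    using XY inv_letter_image
    by (cases l; cases "fst l"; cases "snd l") (simp_all add: letter_weight_def X_def Y_def int_pow_neg)
  have "reduced v \<Longrightarrow> h v = X [^] exp_sum GX v \<otimes> Y [^] exp_sum GY v" for v
  proof (induction v)
    case Nil
    then show ?case
      using hom.hom_one XY by (simp add: one_F2)
  next
    case (Cons l v)
    have v: "reduced v"
      using Cons.prems by (rule reduced_ConsD)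
    then have "l # v = [l] \<otimes>\<^bsub>F2\<^esub> v"
      using Cons.prems push_reduced red_reduced by (simp add: mult_F2 red_Cons)
    then have "h (l # v) = h [l] \<otimes> h v"
      using v hom.hom_mult[of "[l]" v] by (simp add: carrier_F2)
    then show ?case
      using Cons.IH v XY by (simp add: letter_image int_pow_mult m_ac)
  qed
  from this[of w] show ?thesis
    using w by (simp add: carrier_F2 X_def Y_def)
qed

lemma comm_F2_eq: "comm_F2 = {w \<in> carrier F2. exp_sum GX w = 0 \<and> exp_sum GY w = 0}"
  (is "_ = ?K")
proof
  interpret group F2 by (rule group_F2)
  have "subgroup ?K F2"
  proof (rule subgroupI)
    have "[] \<in> ?K"
      by (simp add: carrier_F2)
    then show "?K \<noteq> {}"
      by blast
  qed (auto simp: exp_sum_mult_F2 exp_sum_inv_F2)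
  moreover have "derived_set F2 (carrier F2) \<subseteq> ?K"
    by (auto simp: exp_sum_mult_F2 exp_sum_inv_F2)
  ultimately show "comm_F2 \<subseteq> ?K"
    unfolding comm_F2_def derived_def by (rule generate_subgroup_incl[rotated])
next
  interpret group F2 by (rule group_F2)
  interpret normal comm_F2 F2
    unfolding comm_F2_def by (rule derived_self_is_normal)
  interpret Q: comm_group "F2 Mod comm_F2"
    unfolding comm_F2_def by (rule derived_quot_is_comm_group)
  show "?K \<subseteq> comm_F2"
  proof
    fix w assume "w \<in> ?K"
    then have "comm_F2 #>\<^bsub>F2\<^esub> w = \<one>\<^bsub>F2 Mod comm_F2\<^esub>"
      using Q.hom_F2_eq_exp_sums[OF r_coset_hom_Mod, of w] by (simp del: one_FactGroup mult_FactGroup)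
    then have "comm_F2 #>\<^bsub>F2\<^esub> w = comm_F2"
      by simp
    then show "w \<in> comm_F2"
      using coset_join1 \<open>w \<in> ?K\<close> subgroup_axioms by blast
  qed
qed

lemma xheight_mult_F2:
  "xheight 0 (a \<otimes>\<^bsub>F2\<^esub> b) = xheight 0 a + xheight 0 b + exp_sum GY a * exp_sum GX b"
  using xheight_shift[of 0 "exp_sum GY a" b] by (simp add: mult_F2 xheight_red xheight_append)

lemma xheight_inv_F2:
  assumes "a \<in> carrier F2"
  shows "xheight 0 (inv\<^bsub>F2\<^esub> a) = exp_sum GY a * exp_sum GX a - xheight 0 a"
proof -
  have "0 = xheight 0 (a \<otimes>\<^bsub>F2\<^esub> inv\<^bsub>F2\<^esub> a)"
    using group.r_inv[OF group_F2 assms] by (simp add: one_F2)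
  also have "\<dots> = xheight 0 a + xheight 0 (inv\<^bsub>F2\<^esub> a) - exp_sum GY a * exp_sum GX a"
    using assms by (simp add: xheight_mult_F2 exp_sum_inv_F2)
  finally show ?thesis
    by simp
qed

lemma xheight_conj_F2:
  assumes "a \<in> carrier F2" and "c \<in> carrier F2"
  shows "xheight 0 (c \<otimes>\<^bsub>F2\<^esub> a \<otimes>\<^bsub>F2\<^esub> inv\<^bsub>F2\<^esub> c) =
    xheight 0 a + exp_sum GY c * exp_sum GX a - exp_sum GY a * exp_sum GX c"
  using assms by (simp add: xheight_mult_F2 xheight_inv_F2 exp_sum_mult_F2 exp_sum_inv_F2 algebra_simps)

theorem lemma3p1:
  fixes g a b :: "letter list"
  assumes "g \<in> comm_F2"
    and "phi g = 0"
    and "a \<in> carrier F2" and "b \<in> carrier F2"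
    and "g = a \<otimes>\<^bsub>F2\<^esub> b"
    and "conjugate_F2 a b"
  shows "a \<in> comm_F2 \<and> phi a = 0 \<and> b \<in> comm_F2 \<and> phi b = 0"
proof -
  obtain c where c: "c \<in> carrier F2" and b: "b = c \<otimes>\<^bsub>F2\<^esub> a \<otimes>\<^bsub>F2\<^esub> inv\<^bsub>F2\<^esub> c"
    using assms(6) unfolding conjugate_F2_def by blast
  have exp_sum_b: "exp_sum s b = exp_sum s a" for s
    using assms(3) b c by (simp add: exp_sum_mult_F2 exp_sum_inv_F2)
  have "exp_sum s g = 0" for s
    using assms(1) comm_F2_eq by (cases s) auto
  then have exp_sum_a: "exp_sum s a = 0" for s
    using assms(5) exp_sum_b by (simp add: exp_sum_mult_F2)
  then have "a \<in> comm_F2" "b \<in> comm_F2"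
    using assms(3,4) exp_sum_b by (simp_all add: comm_F2_eq)
  moreover have "xheight 0 b = xheight 0 a"
    using assms(3) b c exp_sum_a by (simp add: xheight_conj_F2)
  moreover have "xheight 0 a + xheight 0 b = 0"
    using assms(2,5) exp_sum_a by (simp add: phi_eq_xheight xheight_mult_F2)
  ultimately show ?thesis
    by (simp add: phi_eq_xheight)
qed

end
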